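(* Let $\Sigma\in\mathbb R^{d\times d}$ be symmetric positive definite, $a\in\mathbb R^d$, $\lambda>0$. Let $w_t,\hat w_t$ solve the gradient flows $\frac{d}{dt}w_t=-(\Sigma w_t-a)$, $\frac{d}{dt}\hat w_t=-(\Sigma\hat w_t-a+\lambda\hat w_t)$ with $w_0=\hat w_0=0$, so $w_t=(I-e^{-\Sigma t})\Sigma^{-1}a$ and $\hat w_t=(I-e^{-(\Sigma+\lambda I)t})(\Sigma+\lambda I)^{-1}a$. With the continuous weighting scheme $P_t=1-e^{-\lambda t}$, $p_t=\lambda e^{-\lambda t}$, and $\tilde w_t=P_t^{-1}\int_0^tp_sw_s\,ds$, we have for all $t>0$ $$\hat w_t-\tilde w_t=(1-P_t)(w_t-\tilde w_t).$$
   Context: This is the gradient-flow limit of gradient descent for $L(w)=\frac12w^\top\Sigma w-w^\top a$ and its $\ell_2$-regularized version $L(w)+\frac\lambda2\|w\|_2^2$. *)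

theory Defs
  imports "HOL-Analysis.Analysis"
begin

definition sym_pos_def :: "real^'n^'n \<Rightarrow> bool" where
  "sym_pos_def S \<longleftrightarrow> transpose S = S \<and> (\<forall>x. x \<noteq> 0 \<longrightarrow> x \<bullet> (S *v x) > 0)"

end

theory Submission
  imports Defs
begin

text \<open>The regularized flow is the exponential average of the plain one,
  \<open>what t = exp (-\<lambda>t) w t + I t\<close> with \<open>I t = \<integral>\<^sub>0\<^sup>t \<lambda> exp (-\<lambda>s) w s ds\<close>.
  The right-hand side solves the regularized equation because of the balance
  \<open>\<Sigma> I s + \<lambda> I s + \<lambda> exp (-\<lambda>s) w s = (1 - exp (-\<lambda>s)) a\<close>, whose two sides have equal
  derivatives and vanish at \<open>0\<close>; solutions of the regularized equation are unique since
  \<open>\<parallel>v - u\<parallel>\<^sup>2\<close> is nonincreasing when \<open>\<Sigma>\<close> is positive. Dividing \<open>I t\<close> by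
  \<open>P t = 1 - exp (-\<lambda>t)\<close> then gives the identity.\<close>

lemma dissipative_flow_from_zero_stays_zero:
  fixes h :: "real \<Rightarrow> 'a::real_inner" and A :: "'a \<Rightarrow> 'a"
  assumes h': "\<And>s. s \<in> {0..T} \<Longrightarrow> (h has_vector_derivative - A (h s)) (at s within {0..T})"
    and A: "\<And>x. 0 \<le> x \<bullet> A x" and h0: "h 0 = 0" and T: "0 \<le> T"
  shows "h T = 0"
proof -
  have deriv: "((\<lambda>s. h s \<bullet> h s) has_derivative (\<lambda>d. d * (- 2 * (h s \<bullet> A (h s))))) (at s within {0..T})"
    if "0 \<le> s" "s \<le> T" for s
  proof -
    have "((\<lambda>s. h s \<bullet> h s) has_derivative
        (\<lambda>d. h s \<bullet> (d *\<^sub>R - A (h s)) + (d *\<^sub>R - A (h s)) \<bullet> h s)) (at s within {0..T})"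
      using h'[of s] that unfolding has_vector_derivative_def by (intro has_derivative_inner) auto
    then show ?thesis
      by (rule has_derivative_eq_rhs) (simp add: inner_commute[of "A (h s)"] fun_eq_iff)
  qed
  obtain s where "s \<in> {0..T}" and "h T \<bullet> h T - h 0 \<bullet> h 0 = T * (- 2 * (h s \<bullet> A (h s)))"
    using mvt_very_simple[OF T deriv] by auto
  then have "h T \<bullet> h T \<le> 0"
    using A[of "h s"] T h0 by (simp add: mult_nonneg_nonpos)
  then show ?thesis
    by (metis inner_eq_zero_iff inner_ge_zero order_antisym)
qed

lemma exp_weighted_average_solves_regularized_flow:
  fixes w :: "real \<Rightarrow> 'a::banach" and A :: "'a \<Rightarrow> 'a" and lam :: real
  defines "I \<equiv> \<lambda>s. integral {0..s} (\<lambda>u. (lam * exp (- lam * u)) *\<^sub>R w u)"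
  defines "g \<equiv> \<lambda>s. exp (- lam * s) *\<^sub>R w s + I s"
  assumes A: "bounded_linear A"
    and w': "\<And>s. s \<in> {0..T} \<Longrightarrow> (w has_vector_derivative b - A (w s)) (at s within {0..T})"
    and w0: "w 0 = 0" and s: "s \<in> {0..T}"
  shows "(g has_vector_derivative b - A (g s) - lam *\<^sub>R g s) (at s within {0..T})"
proof -
  define k where
    "k s = A (I s) - ((1 - exp (- lam * s)) *\<^sub>R b - lam *\<^sub>R I s - (lam * exp (- lam * s)) *\<^sub>R w s)"
    for s
  have "continuous_on {0..T} w"
    unfolding continuous_on_eq_continuous_within using w' has_vector_derivative_continuous by blast
  then have I': "(I has_vector_derivative (lam * exp (- lam * s)) *\<^sub>R w s) (at s within {0..T})"
    if "s \<in> {0..T}" for s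
    unfolding I_def using that by (intro integral_has_vector_derivative continuous_intros) auto
  have "(k has_vector_derivative 0) (at s within {0..T})" if "s \<in> {0..T}" for s
  proof -
    have AI: "((\<lambda>x. A (I x)) has_vector_derivative A ((lam * exp (- lam * s)) *\<^sub>R w s)) (at s within {0..T})"
      using bounded_linear.has_vector_derivative[OF A I'[OF that]] .
    show ?thesis
      unfolding k_def
      apply (rule has_vector_derivative_eq_rhs)
       apply (auto intro!: derivative_eq_intros AI I' w' that)[1]
      apply (simp add: linear_simps[OF A] algebra_simps)
      done
  qed
  then obtain c where c: "\<And>s. s \<in> {0..T} \<Longrightarrow> k s = c"
    using has_derivative_zero_constant[of "{0..T}" k]
    unfolding has_vector_derivative_def by fastforce
  have "I 0 = 0"
    by (simp add: I_def)
  then have "k 0 = 0"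
    by (simp add: k_def w0 linear_simps(3)[OF A])
  moreover have "0 \<in> {0..T}"
    using s by simp
  ultimately have "k s = 0"
    using c[OF s] c by metis
  then have AI_eq: "A (I s) = (1 - exp (- lam * s)) *\<^sub>R b - lam *\<^sub>R I s - (lam * exp (- lam * s)) *\<^sub>R w s"
    by (simp only: k_def right_minus_eq)
  show ?thesis
    unfolding g_def
    apply (rule has_vector_derivative_eq_rhs)
     apply (auto intro!: derivative_eq_intros I' w' s)[1]
    apply (simp add: AI_eq linear_simps[OF A] algebra_simps)
    done
qed

lemma regularized_flow_unique:
  fixes v u :: "real \<Rightarrow> 'a::real_inner" and A :: "'a \<Rightarrow> 'a" and lam :: real
  assumes A: "linear A" and A_nonneg: "\<And>x. 0 \<le> x \<bullet> A x" and lam: "0 \<le> lam"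
    and v': "\<And>s. s \<in> {0..T} \<Longrightarrow> (v has_vector_derivative b - A (v s) - lam *\<^sub>R v s) (at s within {0..T})"
    and u': "\<And>s. s \<in> {0..T} \<Longrightarrow> (u has_vector_derivative b - A (u s) - lam *\<^sub>R u s) (at s within {0..T})"
    and "v 0 = u 0" and "0 \<le> T"
  shows "v T = u T"
proof -
  have "((\<lambda>s. v s - u s) has_vector_derivative
      - (A (v s - u s) + lam *\<^sub>R (v s - u s))) (at s within {0..T})" if "s \<in> {0..T}" for s
    by (rule has_vector_derivative_eq_rhs[OF has_vector_derivative_diff[OF v'[OF that] u'[OF that]]])
      (simp add: linear_diff[OF A] algebra_simps)
  moreover have "0 \<le> x \<bullet> (A x + lam *\<^sub>R x)" for x
    using A_nonneg[of x] lam by (simp add: inner_add_right)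
  ultimately have "v T - u T = 0"
    using dissipative_flow_from_zero_stays_zero[of T "\<lambda>s. v s - u s" "\<lambda>x. A x + lam *\<^sub>R x"] assms
    by simp
  then show ?thesis
    by simp
qed

theorem mainTheorem9:
  fixes Sigma :: "real^'n^'n" and a :: "real^'n" and lam :: real
    and w what :: "real \<Rightarrow> real^'n"
  assumes Sigma: "sym_pos_def Sigma"
    and lam: "lam > 0"
    and w_ode: "\<forall>t\<ge>0. (w has_vector_derivative (- (Sigma *v w t - a))) (at t within {0..})"
    and what_ode: "\<forall>t\<ge>0. (what has_vector_derivative
                       (- (Sigma *v what t - a + lam *\<^sub>R what t))) (at t within {0..})"
    and w0: "w 0 = 0" and what0: "what 0 = 0"
    and t: "t > 0"
  shows "let P = (\<lambda>s. 1 - exp (- lam * s));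
             p = (\<lambda>s. lam * exp (- lam * s));
             wt = inverse (P t) *\<^sub>R integral {0..t} (\<lambda>s. p s *\<^sub>R w s)
         in what t - wt = (1 - P t) *\<^sub>R (w t - wt)"
proof -
  define E where "E = exp (- lam * t)"
  define J where "J = integral {0..t} (\<lambda>s. (lam * exp (- lam * s)) *\<^sub>R w s)"
  have w': "(w has_vector_derivative a - Sigma *v w s) (at s within {0..t})" if "s \<in> {0..t}" for s
    using w_ode that by (auto intro: has_vector_derivative_within_subset)
  have what': "(what has_vector_derivative a - Sigma *v what s - lam *\<^sub>R what s) (at s within {0..t})"
    if "s \<in> {0..t}" for s
    using what_ode that by (auto intro: has_vector_derivative_within_subset simp: algebra_simps)
  have Sigma_nonneg: "0 \<le> x \<bullet> (Sigma *v x)" for x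
    using Sigma unfolding sym_pos_def_def by (cases "x = 0") (auto intro: less_imp_le)
  have "what t = E *\<^sub>R w t + J"
    unfolding E_def J_def
    by (rule regularized_flow_unique[OF _ Sigma_nonneg _ what'
          exp_weighted_average_solves_regularized_flow[OF _ w']])
      (use lam t what0 w0 in \<open>auto intro: bounded_linear.linear\<close>)
  moreover have "inverse (1 - E) = 1 + E * inverse (1 - E)"
    using lam t by (simp add: E_def field_simps)
  ultimately show ?thesis
    unfolding Let_def E_def[symmetric] J_def[symmetric]
    by (simp add: algebra_simps) (metis scaleR_left_distrib scaleR_one)
qed

end
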